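(* For all $Y_2>Y_1\ge1$, $$\int_{\substack{\mathbf{y}\in\mathbb{R}^4\\ Y_1\le|\mathbf{y}|<Y_2}}\frac{d\mathbf{y}}{|\mathbf{y}|^2\max(|Q_1(\mathbf{y})|,|Q_2(\mathbf{y})|)}=\tau_\infty\log\Big(\frac{Y_2}{Y_1}\Big).$$
   Context: $L_i(x_1,x_2)=a_ix_1+b_ix_2\in\mathbb{Z}[x_1,x_2]$ ($1\le i\le4$) with $\gcd(a_i,b_i)=1$, pairwise non-proportional; $Q_1(\mathbf{y})=\sum a_iy_i^2$, $Q_2(\mathbf{y})=-\sum b_iy_i^2$, and the curve $Q_1=Q_2=0$ in $\mathbb{P}^3$ has no real points. $|\cdot|$ is the sup norm, $\mathrm{e}(t)=e^{2\pi it}$, and $$\tau_\infty=\int_{-\infty}^{\infty}\int_{[-1,1]^6}\mathrm{e}\Big(\theta\sum_{i=1}^4L_i(\mathbf{x})y_i^2\Big)\,d\mathbf{x}\,d\mathbf{y}\,d\theta.$$ *)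

theory Defs
  imports "HOL-Analysis.Analysis" "HOL-Library.Numeral_Type"
begin

definition supnorm4 :: "real^4 \<Rightarrow> real" where
  "supnorm4 y = (MAX i\<in>UNIV. \<bar>y $ i\<bar>)"

definition ee :: "real \<Rightarrow> complex" where
  "ee t = exp (2 * of_real pi * \<i> * of_real t)"

definition Q1 :: "(4 \<Rightarrow> int) \<Rightarrow> real^4 \<Rightarrow> real" where
  "Q1 a y = (\<Sum>i\<in>UNIV. of_int (a i) * (y $ i)^2)"

definition Q2 :: "(4 \<Rightarrow> int) \<Rightarrow> real^4 \<Rightarrow> real" where
  "Q2 b y = - (\<Sum>i\<in>UNIV. of_int (b i) * (y $ i)^2)"

definition Lform :: "(4 \<Rightarrow> int) \<Rightarrow> (4 \<Rightarrow> int) \<Rightarrow> 4 \<Rightarrow> real \<Rightarrow> real \<Rightarrow> real" where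
  "Lform a b i x1 x2 = of_int (a i) * x1 + of_int (b i) * x2"

definition tau_inner :: "(4 \<Rightarrow> int) \<Rightarrow> (4 \<Rightarrow> int) \<Rightarrow> real \<Rightarrow> complex" where
  "tau_inner a b \<theta> =
     integral (cbox (-1, -1, -One) (1, 1, One))
       (\<lambda>(x1::real, x2::real, y::real^4).
          ee (\<theta> * (\<Sum>i\<in>UNIV. Lform a b i x1 x2 * (y $ i)^2)))"

text \<open>tau_infinity: the outer integral over theta in R (Henstock-Kurzweil integral over UNIV,
  which includes improper integrals).\<close>
definition tau_infty :: "(4 \<Rightarrow> int) \<Rightarrow> (4 \<Rightarrow> int) \<Rightarrow> complex" where
  "tau_infty a b = integral (UNIV :: real set) (tau_inner a b)"

end

theory Submission
  imports Defs "HOL-Probability.Sinc_Integral" "HOL-Real_Asymp.Real_Asymp"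
begin

text \<open>Integrating out \<open>x\<^sub>1, x\<^sub>2\<close> turns \<open>\<tau>\<^sub>\<infinity>\<close> into \<open>\<integral>\<^sub>\<real> \<integral>\<^sub>[-1,1]\<^sup>4 4 sinc(2\<pi>\<theta>Q\<^sub>1(y)) sinc(2\<pi>\<theta>Q\<^sub>2(y)) dy d\<theta>\<close>.
  For fixed \<open>y \<noteq> 0\<close> the \<open>\<theta>\<close>-integral of this kernel over \<open>[0, t]\<close> has an explicit antiderivative in
  terms of the sine integral; it is bounded by a multiple of \<open>1 / M(y)\<close>, \<open>M = max |Q\<^sub>1| |Q\<^sub>2|\<close>,
  and tends to \<open>1 / M(y)\<close>. Since the curve \<open>Q\<^sub>1 = Q\<^sub>2 = 0\<close> has no real points, \<open>M\<close> is a
  positive quadratic gauge, so \<open>1 / M\<close> is integrable on the unit cube, and dominated convergence gives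
  \<open>\<tau>\<^sub>\<infinity> = 2 C\<close> with \<open>C = \<integral>\<^sub>[-1,1]\<^sup>4 1 / M\<close>. On the other hand \<open>1 / M\<close> is homogeneous of degree \<open>-2\<close>,
  so its integral over the shell \<open>r \<le> |y| < r q\<close> is \<open>r\<^sup>2 (q\<^sup>2 - 1) C\<close>, and the integral of
  \<open>1 / (|y|\<^sup>2 M(y))\<close> over that shell lies between \<open>(1 - q\<^sup>-\<^sup>2) C\<close> and \<open>(q\<^sup>2 - 1) C\<close>. Cutting
  \<open>Y\<^sub>1 \<le> |y| < Y\<^sub>2\<close> into \<open>N\<close> shells of equal ratio and letting \<open>N \<rightarrow> \<infinity>\<close> gives \<open>2 C log(Y\<^sub>2 / Y\<^sub>1)\<close>.\<close>

section \<open>Products of sinc functions\<close>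

text \<open>The \<open>sinc\<close> of \<open>Sinc_Integral\<close> is an abbreviation, so its case split would
  be exposed in every term; this constant with the same values is used instead.\<close>
definition sinc_fun :: "real \<Rightarrow> real" where
  "sinc_fun x = (if x = 0 then 1 else sin x / x)"

lemma sinc_fun_minus [simp]: "sinc_fun (- x) = sinc_fun x"
  by (simp add: sinc_fun_def)

lemma continuous_on_sinc_fun [continuous_intros]:
  "continuous_on S f \<Longrightarrow> continuous_on S (\<lambda>x. sinc_fun (f x))"
  using continuous_on_sinc[of S f] by (simp add: sinc_fun_def [abs_def])

lemma continuous_on_Si [continuous_intros]:
  "continuous_on S f \<Longrightarrow> continuous_on S (\<lambda>x. Si (f x))"
  using continuous_on_compose[of S f Si] continuous_at_imp_continuous_on isCont_Si
  by (auto simp: o_def)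

lemma has_real_derivative_Si [derivative_intros]:
  "(f has_real_derivative f') (at x within S) \<Longrightarrow>
     ((\<lambda>x. Si (f x)) has_real_derivative sinc_fun (f x) * f') (at x within S)"
  using DERIV_chain2[OF DERIV_Si] by (simp add: sinc_fun_def)

lemma Si_0 [simp]: "Si 0 = 0"
  by (simp add: Si_def zero_ereal_def [symmetric])

lemma abs_sinc_fun_le: "x \<noteq> 0 \<Longrightarrow> \<bar>sinc_fun x\<bar> \<le> 1 / \<bar>x\<bar>"
  using abs_sin_le_one[of x] by (simp add: sinc_fun_def abs_divide divide_right_mono)

lemma mult_sinc_fun: "x \<noteq> 0 \<Longrightarrow> c * sinc_fun (c * x) = sin (c * x) / x"
  by (simp add: sinc_fun_def)

lemma abs_Si_diff_le:
  assumes "0 < d" "d \<le> s" "0 < t"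
  shows "\<bar>Si (s * t) - Si (d * t)\<bar> \<le> (s - d) / d"
proof (cases "d = s")
  case False
  then have lt: "d * t < s * t"
    using assms by simp
  obtain z where z: "d * t < z" "z < s * t" "Si (s * t) - Si (d * t) = (s * t - d * t) * sinc_fun z"
    using MVT2[OF lt, of Si sinc_fun] DERIV_Si by (force simp: sinc_fun_def)
  have "0 < d * t"
    using assms by simp
  then have "\<bar>sinc_fun z\<bar> \<le> 1 / (d * t)"
    using abs_sinc_fun_le[of z] z by (smt (verit) frac_le)
  then have "\<bar>Si (s * t) - Si (d * t)\<bar> \<le> (s * t - d * t) * (1 / (d * t))"
    using z lt by (simp add: abs_mult mult_left_mono del: times_divide_eq_right)
  also have "\<dots> = (s - d) / d"
    using assms by (simp add: field_simps)
  finally show ?thesis .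
qed simp

text \<open>For \<open>0 \<le> \<alpha> \<le> \<beta>\<close> this is the antiderivative of \<open>4 sinc(\<alpha>\<theta>) sinc(\<beta>\<theta>)\<close> vanishing
  at \<open>0\<close>, obtained by integrating by parts and writing
  \<open>2 sin(\<alpha>\<theta>) sin(\<beta>\<theta>) = cos((\<beta> - \<alpha>)\<theta>) - cos((\<alpha> + \<beta>)\<theta>)\<close>.\<close>
definition sinc_prod_primitive :: "real \<Rightarrow> real \<Rightarrow> real \<Rightarrow> real" where
  "sinc_prod_primitive \<alpha> \<beta> t =
     (if \<alpha> = 0 then 4 / \<beta> * Si (\<beta> * t)
      else 4 / (\<alpha> * \<beta>) * ((\<alpha> + \<beta>) / 2 * Si ((\<alpha> + \<beta>) * t) + (\<alpha> - \<beta>) / 2 * Si ((\<beta> - \<alpha>) * t)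
                            - \<beta> * sin (\<alpha> * t) * sinc_fun (\<beta> * t)))"

lemma sinc_prod_primitive_0 [simp]: "sinc_prod_primitive \<alpha> \<beta> 0 = 0"
  by (simp add: sinc_prod_primitive_def)

lemma has_real_derivative_sinc_prod_primitive:
  assumes "0 \<le> \<alpha>" "\<alpha> \<le> \<beta>" "0 < \<beta>" "0 < x"
  shows "(sinc_prod_primitive \<alpha> \<beta> has_real_derivative 4 * sinc_fun (\<alpha> * x) * sinc_fun (\<beta> * x)) (at x)"
proof (cases "\<alpha> = 0")
  case True
  have "((\<lambda>t. 4 / \<beta> * Si (\<beta> * t)) has_real_derivative 4 / \<beta> * (sinc_fun (\<beta> * x) * \<beta>)) (at x)"
    by (auto intro!: derivative_eq_intros)
  then show ?thesis
    using True assms by (simp add: sinc_prod_primitive_def [abs_def] sinc_fun_def)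
next
  case False
  then have \<alpha>: "0 < \<alpha>"
    using assms by simp
  define F where "F t = 4 / (\<alpha> * \<beta>) * ((\<alpha> + \<beta>) / 2 * Si ((\<alpha> + \<beta>) * t)
      + (\<alpha> - \<beta>) / 2 * Si ((\<beta> - \<alpha>) * t) - sin (\<alpha> * t) * sin (\<beta> * t) / t)" for t
  have F_eq: "F t = sinc_prod_primitive \<alpha> \<beta> t" if "t \<in> {0<..}" for t
    using that \<alpha> assms by (simp add: F_def sinc_prod_primitive_def sinc_fun_def)
  have "(F has_real_derivative 4 / (\<alpha> * \<beta>) * ((\<alpha> + \<beta>) / 2 * (sin ((\<alpha> + \<beta>) * x) / x)
      + (\<alpha> - \<beta>) / 2 * (sin ((\<beta> - \<alpha>) * x) / x)
      - ((\<alpha> * cos (\<alpha> * x) * sin (\<beta> * x) + \<beta> * sin (\<alpha> * x) * cos (\<beta> * x)) * x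
         - sin (\<alpha> * x) * sin (\<beta> * x)) / x\<^sup>2)) (at x)"
  proof -
    have "sinc_fun (c * x) * c = sin (c * x) / x" for c
      using mult_sinc_fun[of x c] assms by (simp add: mult.commute)
    then show ?thesis
      unfolding F_def using assms \<alpha>
      by (auto intro!: derivative_eq_intros) (simp_all add: power2_eq_square field_simps)
  qed
  moreover have "4 / (\<alpha> * \<beta>) * ((\<alpha> + \<beta>) / 2 * (sin ((\<alpha> + \<beta>) * x) / x)
      + (\<alpha> - \<beta>) / 2 * (sin ((\<beta> - \<alpha>) * x) / x)
      - ((\<alpha> * cos (\<alpha> * x) * sin (\<beta> * x) + \<beta> * sin (\<alpha> * x) * cos (\<beta> * x)) * x
         - sin (\<alpha> * x) * sin (\<beta> * x)) / x\<^sup>2) = 4 * sinc_fun (\<alpha> * x) * sinc_fun (\<beta> * x)"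
    using assms \<alpha>
    by (simp add: sinc_fun_def sin_add sin_diff distrib_right left_diff_distrib field_simps power2_eq_square)
  ultimately have "(F has_real_derivative 4 * sinc_fun (\<alpha> * x) * sinc_fun (\<beta> * x)) (at x)"
    by simp
  then show ?thesis
    by (rule has_field_derivative_transform_within_open[of _ _ _ "{0<..}"]) (use assms F_eq in auto)
qed

lemma has_integral_sinc_prod:
  assumes "0 \<le> \<alpha>" "\<alpha> \<le> \<beta>" "0 < \<beta>" "0 \<le> t"
  shows "((\<lambda>\<theta>. 4 * sinc_fun (\<alpha> * \<theta>) * sinc_fun (\<beta> * \<theta>)) has_integral sinc_prod_primitive \<alpha> \<beta> t) {0..t}"
proof -
  have "continuous_on {0..t} (sinc_prod_primitive \<alpha> \<beta>)"
    using assms unfolding sinc_prod_primitive_def by (cases "\<alpha> = 0") (auto intro!: continuous_intros)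
  then have "((\<lambda>\<theta>. 4 * sinc_fun (\<alpha> * \<theta>) * sinc_fun (\<beta> * \<theta>))
      has_integral sinc_prod_primitive \<alpha> \<beta> t - sinc_prod_primitive \<alpha> \<beta> 0) {0..t}"
    using assms has_real_derivative_sinc_prod_primitive
    by (intro fundamental_theorem_of_calculus_interior)
       (auto simp: has_real_derivative_iff_has_vector_derivative [symmetric])
  then show ?thesis
    by simp
qed


lemma sin_mult_sinc_fun: "t \<noteq> 0 \<Longrightarrow> \<beta> * sin (\<alpha> * t) * sinc_fun (\<beta> * t) = sin (\<alpha> * t) * sin (\<beta> * t) / t"
  by (simp add: sinc_fun_def)

lemma abs_sin_mult_sinc_fun_le:
  assumes "0 \<le> \<alpha>" "0 \<le> t"
  shows "\<bar>\<beta> * sin (\<alpha> * t) * sinc_fun (\<beta> * t)\<bar> \<le> \<alpha>"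
proof (cases "t = 0")
  case False
  then have t: "0 < t"
    using assms by simp
  have "\<bar>\<beta> * sin (\<alpha> * t) * sinc_fun (\<beta> * t)\<bar> = \<bar>sin (\<alpha> * t)\<bar> * (\<bar>sin (\<beta> * t)\<bar> / t)"
    using t by (simp add: sin_mult_sinc_fun abs_mult abs_divide)
  also have "\<dots> \<le> (\<alpha> * t) * (1 / t)"
    using abs_sin_x_le_abs_x[of "\<alpha> * t"] abs_sin_le_one[of "\<beta> * t"] assms t
    by (intro mult_mono divide_right_mono) (auto simp: abs_mult)
  finally show ?thesis
    using t by simp
qed (use assms in simp)

lemma abs_Si_sum_diff_le:
  assumes Si_bound: "\<And>T. \<bar>Si T\<bar> \<le> B" and "0 < \<alpha>" "\<alpha> \<le> \<beta>" "0 \<le> t"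
  shows "\<beta> / 2 * \<bar>Si ((\<alpha> + \<beta>) * t) - Si ((\<beta> - \<alpha>) * t)\<bar> \<le> 2 * \<alpha> * (B + 1)"
proof -
  have "0 \<le> B"
    using Si_bound[of 0] by simp
  consider "\<beta> \<le> 2 * \<alpha>" | "t = 0" | "2 * \<alpha> < \<beta>" "0 < t"
    using assms by linarith
  then show ?thesis
  proof cases
    case 1
    have "\<bar>Si ((\<alpha> + \<beta>) * t) - Si ((\<beta> - \<alpha>) * t)\<bar> \<le> 2 * B"
      using Si_bound[of "(\<alpha> + \<beta>) * t"] Si_bound[of "(\<beta> - \<alpha>) * t"] by linarith
    then have "\<beta> / 2 * \<bar>Si ((\<alpha> + \<beta>) * t) - Si ((\<beta> - \<alpha>) * t)\<bar> \<le> \<beta> * B"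
      using assms by (simp add: mult_left_mono)
    also have "\<dots> \<le> 2 * \<alpha> * B"
      using 1 \<open>0 \<le> B\<close> by (simp add: mult_right_mono)
    finally show ?thesis
      using assms by (simp add: algebra_simps)
  next
    case 2
    then show ?thesis
      using assms \<open>0 \<le> B\<close> by simp
  next
    case 3
    then have "\<bar>Si ((\<alpha> + \<beta>) * t) - Si ((\<beta> - \<alpha>) * t)\<bar> \<le> ((\<alpha> + \<beta>) - (\<beta> - \<alpha>)) / (\<beta> - \<alpha>)"
      using assms by (intro abs_Si_diff_le) auto
    also have "\<dots> \<le> 4 * \<alpha> / \<beta>"
      using 3 assms by (simp add: field_simps)
    finally have "\<beta> / 2 * \<bar>Si ((\<alpha> + \<beta>) * t) - Si ((\<beta> - \<alpha>) * t)\<bar> \<le> 2 * \<alpha>"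
      using assms by (simp add: field_simps)
    also have "\<dots> \<le> 2 * \<alpha> * (B + 1)"
      using assms \<open>0 \<le> B\<close> mult_left_mono[of 1 "B + 1" "2 * \<alpha>"] by simp
    finally show ?thesis .
  qed
qed

lemma sinc_prod_primitive_bound:
  obtains K where "\<And>\<alpha> \<beta> t. 0 \<le> \<alpha> \<Longrightarrow> \<alpha> \<le> \<beta> \<Longrightarrow> 0 < \<beta> \<Longrightarrow> 0 \<le> t \<Longrightarrow>
    \<bar>sinc_prod_primitive \<alpha> \<beta> t\<bar> \<le> K / \<beta>"
proof -
  obtain B where B: "\<And>T. \<bar>Si T\<bar> \<le> B"
    using bounded_Si by blast
  have "\<bar>sinc_prod_primitive \<alpha> \<beta> t\<bar> \<le> 12 * (B + 1) / \<beta>"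
    if "0 \<le> \<alpha>" "\<alpha> \<le> \<beta>" "0 < \<beta>" "0 \<le> t" for \<alpha> \<beta> t
  proof (cases "\<alpha> = 0")
    case True
    then show ?thesis
      using B[of "\<beta> * t"] \<open>0 < \<beta>\<close>
      by (simp add: sinc_prod_primitive_def abs_mult divide_right_mono)
  next
    case False
    then have \<alpha>: "0 < \<alpha>"
      using \<open>0 \<le> \<alpha>\<close> by simp
    define S where "S = Si ((\<alpha> + \<beta>) * t) + Si ((\<beta> - \<alpha>) * t)"
    define D where "D = Si ((\<alpha> + \<beta>) * t) - Si ((\<beta> - \<alpha>) * t)"
    define R where "R = \<beta> * sin (\<alpha> * t) * sinc_fun (\<beta> * t)"
    have "sinc_prod_primitive \<alpha> \<beta> t = 4 / (\<alpha> * \<beta>) * (\<alpha> / 2 * S + \<beta> / 2 * D - R)"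
      using False by (simp add: sinc_prod_primitive_def S_def D_def R_def field_simps)
    then have "\<bar>sinc_prod_primitive \<alpha> \<beta> t\<bar> = 4 / (\<alpha> * \<beta>) * \<bar>\<alpha> / 2 * S + \<beta> / 2 * D - R\<bar>"
      by (simp only: abs_mult) (use \<alpha> \<open>0 < \<beta>\<close> in simp)
    also have "\<dots> \<le> 4 / (\<alpha> * \<beta>) * (\<bar>\<alpha> / 2 * S\<bar> + \<bar>\<beta> / 2 * D\<bar> + \<bar>R\<bar>)"
      using \<alpha> \<open>0 < \<beta>\<close> by (intro mult_left_mono) (linarith, simp)
    also have "\<dots> \<le> 4 / (\<alpha> * \<beta>) * (\<alpha> * B + 2 * \<alpha> * (B + 1) + \<alpha>)"
    proof -
      have "\<bar>S\<bar> \<le> 2 * B"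
        unfolding S_def using B[of "(\<alpha> + \<beta>) * t"] B[of "(\<beta> - \<alpha>) * t"] by linarith
      then have "\<bar>\<alpha> / 2 * S\<bar> \<le> \<alpha> * B"
        using mult_left_mono[of "\<bar>S\<bar>" "2 * B" "\<alpha> / 2"] \<alpha> by (simp add: abs_mult)
      moreover have "\<bar>\<beta> / 2 * D\<bar> = \<beta> / 2 * \<bar>D\<bar>"
        using \<open>0 < \<beta>\<close> by (simp add: abs_mult)
      ultimately show ?thesis
        using abs_Si_sum_diff_le[OF B \<alpha> \<open>\<alpha> \<le> \<beta>\<close> \<open>0 \<le> t\<close>]
          abs_sin_mult_sinc_fun_le[OF \<open>0 \<le> \<alpha>\<close> \<open>0 \<le> t\<close>, of \<beta>] \<alpha> \<open>0 < \<beta>\<close>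
        unfolding D_def R_def by (intro mult_left_mono) (linarith, simp)
    qed
    also have "\<dots> = 12 * (B + 1) / \<beta>"
      using \<alpha> \<open>0 < \<beta>\<close> by (simp add: field_simps)
    finally show ?thesis .
  qed
  then show ?thesis
    using that by blast
qed

lemma tendsto_Si_scaled: "0 < c \<Longrightarrow> ((\<lambda>t. Si (c * t)) \<longlongrightarrow> pi / 2) at_top"
  by (rule filterlim_compose[OF Si_at_top])
     (rule filterlim_tendsto_pos_mult_at_top[OF tendsto_const _ filterlim_ident])

lemma tendsto_sinc_prod_primitive:
  assumes "0 \<le> \<alpha>" "\<alpha> \<le> \<beta>" "0 < \<beta>"
  shows "(sinc_prod_primitive \<alpha> \<beta> \<longlongrightarrow> 2 * pi / \<beta>) at_top"
proof (cases "\<alpha> = 0")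
  case True
  have "((\<lambda>t. 4 / \<beta> * Si (\<beta> * t)) \<longlongrightarrow> 4 / \<beta> * (pi / 2)) at_top"
    by (intro tendsto_intros tendsto_Si_scaled assms)
  then show ?thesis
    using True by (simp add: sinc_prod_primitive_def [abs_def])
next
  case False
  then have \<alpha>: "0 < \<alpha>"
    using assms by simp
  have lim_R: "((\<lambda>t. \<beta> * sin (\<alpha> * t) * sinc_fun (\<beta> * t)) \<longlongrightarrow> 0) at_top"
  proof (rule Lim_null_comparison)
    show "\<forall>\<^sub>F t in at_top. norm (\<beta> * sin (\<alpha> * t) * sinc_fun (\<beta> * t)) \<le> 1 / t"
      using eventually_gt_at_top[of 0]
    proof eventually_elim
      case (elim t)
      then have "norm (\<beta> * sin (\<alpha> * t) * sinc_fun (\<beta> * t)) = \<bar>sin (\<alpha> * t)\<bar> * (\<bar>sin (\<beta> * t)\<bar> / t)"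
        by (simp add: sin_mult_sinc_fun abs_mult abs_divide)
      also have "\<dots> \<le> 1 * (1 / t)"
        using elim by (intro mult_mono divide_right_mono) auto
      finally show ?case
        by simp
    qed
  qed real_asymp
  have lim_diff: "((\<lambda>t. (\<alpha> - \<beta>) / 2 * Si ((\<beta> - \<alpha>) * t)) \<longlongrightarrow> (\<alpha> - \<beta>) / 2 * (pi / 2)) at_top"
  proof (cases "\<alpha> = \<beta>")
    case False
    then show ?thesis
      using assms by (intro tendsto_mult_left tendsto_Si_scaled) simp
  qed simp
  have lim_sum: "((\<lambda>t. (\<alpha> + \<beta>) / 2 * Si ((\<alpha> + \<beta>) * t)) \<longlongrightarrow> (\<alpha> + \<beta>) / 2 * (pi / 2)) at_top"
    using assms by (intro tendsto_mult_left tendsto_Si_scaled) simp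
  have "(sinc_prod_primitive \<alpha> \<beta> \<longlongrightarrow>
      4 / (\<alpha> * \<beta>) * ((\<alpha> + \<beta>) / 2 * (pi / 2) + (\<alpha> - \<beta>) / 2 * (pi / 2) - 0)) at_top"
    using tendsto_mult_left[OF tendsto_diff[OF tendsto_add[OF lim_sum lim_diff] lim_R], of "4 / (\<alpha> * \<beta>)"]
      False by (simp add: sinc_prod_primitive_def [abs_def])
  also have "4 / (\<alpha> * \<beta>) * ((\<alpha> + \<beta>) / 2 * (pi / 2) + (\<alpha> - \<beta>) / 2 * (pi / 2) - 0) = 2 * pi / \<beta>"
    using \<alpha> by (simp add: field_simps)
  finally show ?thesis .
qed

definition sinc_kernel :: "real \<Rightarrow> real \<Rightarrow> real \<Rightarrow> real" where
  "sinc_kernel A B \<theta> = 4 * sinc_fun (2 * pi * (\<theta> * A)) * sinc_fun (2 * pi * (\<theta> * B))"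

definition sinc_kernel_primitive :: "real \<Rightarrow> real \<Rightarrow> real \<Rightarrow> real" where
  "sinc_kernel_primitive A B =
     sinc_prod_primitive (2 * pi * min \<bar>A\<bar> \<bar>B\<bar>) (2 * pi * max \<bar>A\<bar> \<bar>B\<bar>)"

lemma sinc_fun_abs_scale: "sinc_fun (2 * pi * (\<theta> * A)) = sinc_fun ((2 * pi * \<bar>A\<bar>) * \<theta>)"
proof (cases "0 \<le> A")
  case False
  then have "2 * pi * (\<theta> * A) = - ((2 * pi * \<bar>A\<bar>) * \<theta>)"
    by simp
  then show ?thesis
    by (metis sinc_fun_minus)
qed (simp add: mult_ac)

lemma sinc_kernel_eq:
  "sinc_kernel A B \<theta> =
     4 * sinc_fun ((2 * pi * min \<bar>A\<bar> \<bar>B\<bar>) * \<theta>) * sinc_fun ((2 * pi * max \<bar>A\<bar> \<bar>B\<bar>) * \<theta>)"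
  unfolding sinc_kernel_def sinc_fun_abs_scale[of \<theta> A] sinc_fun_abs_scale[of \<theta> B]
  by (cases "\<bar>A\<bar> \<le> \<bar>B\<bar>") (simp_all add: min_def max_def)

lemma sinc_kernel_minus: "sinc_kernel A B (- \<theta>) = sinc_kernel A B \<theta>"
  by (simp add: sinc_kernel_def)

lemma continuous_on_sinc_kernel [continuous_intros]:
  "continuous_on S f \<Longrightarrow> continuous_on S g \<Longrightarrow> continuous_on S h \<Longrightarrow>
     continuous_on S (\<lambda>x. sinc_kernel (f x) (g x) (h x))"
  unfolding sinc_kernel_def by (intro continuous_intros)

lemma has_integral_sinc_kernel:
  "0 < max \<bar>A\<bar> \<bar>B\<bar> \<Longrightarrow> 0 \<le> t \<Longrightarrow> (sinc_kernel A B has_integral sinc_kernel_primitive A B t) {0..t}"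
  unfolding sinc_kernel_eq [abs_def] sinc_kernel_primitive_def
  by (rule has_integral_sinc_prod) auto

lemma sinc_kernel_primitive_bound:
  obtains K where "\<And>A B t. 0 < max \<bar>A\<bar> \<bar>B\<bar> \<Longrightarrow> 0 \<le> t \<Longrightarrow>
    \<bar>sinc_kernel_primitive A B t\<bar> \<le> K / max \<bar>A\<bar> \<bar>B\<bar>"
proof -
  obtain K where K: "\<And>\<alpha> \<beta> t. 0 \<le> \<alpha> \<Longrightarrow> \<alpha> \<le> \<beta> \<Longrightarrow> 0 < \<beta> \<Longrightarrow> 0 \<le> t \<Longrightarrow>
      \<bar>sinc_prod_primitive \<alpha> \<beta> t\<bar> \<le> K / \<beta>"
    using sinc_prod_primitive_bound by blast
  have "\<bar>sinc_kernel_primitive A B t\<bar> \<le> K / (2 * pi) / max \<bar>A\<bar> \<bar>B\<bar>"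
    if "0 < max \<bar>A\<bar> \<bar>B\<bar>" "0 \<le> t" for A B t
    using K[of "2 * pi * min \<bar>A\<bar> \<bar>B\<bar>" "2 * pi * max \<bar>A\<bar> \<bar>B\<bar>" t] that
    by (simp add: sinc_kernel_primitive_def)
  then show ?thesis
    using that by blast
qed

lemma tendsto_sinc_kernel_primitive:
  "0 < max \<bar>A\<bar> \<bar>B\<bar> \<Longrightarrow> (sinc_kernel_primitive A B \<longlongrightarrow> 1 / max \<bar>A\<bar> \<bar>B\<bar>) at_top"
  using tendsto_sinc_prod_primitive[of "2 * pi * min \<bar>A\<bar> \<bar>B\<bar>" "2 * pi * max \<bar>A\<bar> \<bar>B\<bar>"]
  by (simp add: sinc_kernel_primitive_def)

section \<open>The inner integral of \<open>\<tau>\<^sub>\<infinity>\<close>\<close>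

lemma continuous_on_ee [continuous_intros]:
  "continuous_on S f \<Longrightarrow> continuous_on S (\<lambda>x. ee (f x))"
  unfolding ee_def by (intro continuous_intros)

lemma ee_add: "ee (s + t) = ee s * ee t"
  by (simp add: ee_def distrib_left exp_add)

lemma has_integral_ee_scaled:
  "((\<lambda>x. ee (c * x)) has_integral complex_of_real (2 * sinc_fun (2 * pi * c))) {-1..1}"
proof (cases "c = 0")
  case True
  then show ?thesis
    using has_integral_const_real[of "1::complex" "-1" 1]
    by (simp add: ee_def sinc_fun_def scaleR_conv_of_real)
next
  case False
  define k where "k = 2 * pi * c"
  have k: "k \<noteq> 0"
    using False by (simp add: k_def)
  define F where "F x = inverse (\<i> * k) * exp (x *\<^sub>R (\<i> * k))" for x :: real
  have "(F has_vector_derivative ee (c * x)) (at x within {-1..1})" for x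
  proof -
    have "((\<lambda>x. exp (x *\<^sub>R (\<i> * k))) has_vector_derivative exp (x *\<^sub>R (\<i> * k)) * (\<i> * k))
        (at x within {-1..1})"
      by (rule exp_scaleR_has_vector_derivative_right)
    then have "(F has_vector_derivative inverse (\<i> * k) * (exp (x *\<^sub>R (\<i> * k)) * (\<i> * k)))
        (at x within {-1..1})"
      unfolding F_def by (rule has_vector_derivative_mult_right)
    moreover have "inverse (\<i> * k) * (exp (x *\<^sub>R (\<i> * k)) * (\<i> * k)) = ee (c * x)"
      using k by (simp add: ee_def k_def scaleR_conv_of_real field_simps)
    ultimately show ?thesis
      by simp
  qed
  then have "((\<lambda>x. ee (c * x)) has_integral F 1 - F (-1)) {-1..1}"
    by (intro fundamental_theorem_of_calculus) auto
  also have "F 1 - F (-1) = inverse (\<i> * k) * (cis k - cis (- k))"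
    by (simp add: F_def cis_conv_exp scaleR_conv_of_real right_diff_distrib mult_ac)
  also have "\<dots> = inverse (\<i> * k) * (2 * \<i> * sin k)"
    by (simp add: complex_eq_iff)
  also have "\<dots> = complex_of_real (2 * sinc_fun (2 * pi * c))"
    using k by (simp add: k_def sinc_fun_def field_simps)
  finally show ?thesis .
qed

lemma integral_prod_continuous_swap:
  fixes f :: "'a::euclidean_space \<times> 'b::euclidean_space \<Rightarrow> 'c::banach"
  assumes "continuous_on (cbox (a, c) (b, d)) f"
  shows "integral (cbox (a, c) (b, d)) f = integral (cbox c d) (\<lambda>y. integral (cbox a b) (\<lambda>x. f (x, y)))"
  using integral_prod_continuous[OF assms] integral_swap_continuous[of a c b d "\<lambda>x y. f (x, y)"] assms
  by simp

lemma continuous_on_Q1 [continuous_intros]: "continuous_on S f \<Longrightarrow> continuous_on S (\<lambda>x. Q1 a (f x))"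
  unfolding Q1_def by (intro continuous_intros)

lemma continuous_on_Q2 [continuous_intros]: "continuous_on S f \<Longrightarrow> continuous_on S (\<lambda>x. Q2 b (f x))"
  unfolding Q2_def by (intro continuous_intros)

lemma Q1_scaleR: "Q1 a (c *\<^sub>R y) = c\<^sup>2 * Q1 a y"
  by (simp add: Q1_def sum_distrib_left power_mult_distrib mult_ac)

lemma Q2_scaleR: "Q2 b (c *\<^sub>R y) = c\<^sup>2 * Q2 b y"
  by (simp add: Q2_def sum_distrib_left power_mult_distrib mult_ac)

lemma sum_Lform: "(\<Sum>i\<in>UNIV. Lform a b i x1 x2 * (y $ i)\<^sup>2) = x1 * Q1 a y - x2 * Q2 b y"
  unfolding Lform_def Q1_def Q2_def
  by (simp add: sum.distrib sum_distrib_left algebra_simps)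

lemma tau_inner_eq_integral_sinc_kernel:
  "tau_inner a b \<theta> = integral (cbox (-One) One) (\<lambda>y. complex_of_real (sinc_kernel (Q1 a y) (Q2 b y) \<theta>))"
proof -
  define g where "g y x1 x2 = ee ((\<theta> * Q1 a y) * x1) * ee ((- (\<theta> * Q2 b y)) * x2)" for y x1 x2
  have "(\<lambda>(x1, x2, y). ee (\<theta> * (\<Sum>i\<in>UNIV. Lform a b i x1 x2 * (y $ i)\<^sup>2))) = (\<lambda>(x1, x2, y). g y x1 x2)"
    by (auto simp: fun_eq_iff sum_Lform g_def ee_add [symmetric] algebra_simps)
  then have "tau_inner a b \<theta> = integral (cbox (-1, -1, -One) (1, 1, One)) (\<lambda>(x1, x2, y). g y x1 x2)"
    by (simp add: tau_inner_def)
  also have "\<dots> = integral (cbox (-1, -One) (1, One)) (\<lambda>(x2, y). integral (cbox (-1) 1) (\<lambda>x1. g y x1 x2))"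
    by (subst integral_prod_continuous_swap)
       (auto simp: g_def split_def intro!: continuous_intros)
  also have "\<dots> = integral (cbox (-1, -One) (1, One))
      (\<lambda>(x2, y). of_real (2 * sinc_fun (2 * pi * (\<theta> * Q1 a y))) * ee ((- (\<theta> * Q2 b y)) * x2))"
  proof (intro integral_cong, clarify)
    fix x2 y
    have "((\<lambda>x1. g y x1 x2) has_integral
        of_real (2 * sinc_fun (2 * pi * (\<theta> * Q1 a y))) * ee ((- (\<theta> * Q2 b y)) * x2)) {-1..1}"
      unfolding g_def by (intro has_integral_mult_left has_integral_ee_scaled)
    then show "integral (cbox (-1) 1) (\<lambda>x1. g y x1 x2) =
        of_real (2 * sinc_fun (2 * pi * (\<theta> * Q1 a y))) * ee ((- (\<theta> * Q2 b y)) * x2)"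
      by (metis box_real(2) integral_unique)
  qed
  also have "\<dots> = integral (cbox (-One) One) (\<lambda>y. integral (cbox (-1) 1)
      (\<lambda>x2. of_real (2 * sinc_fun (2 * pi * (\<theta> * Q1 a y))) * ee ((- (\<theta> * Q2 b y)) * x2)))"
    by (subst integral_prod_continuous_swap) (auto simp: split_def intro!: continuous_intros)
  also have "\<dots> = integral (cbox (-One) One) (\<lambda>y. complex_of_real (sinc_kernel (Q1 a y) (Q2 b y) \<theta>))"
  proof (intro integral_cong)
    fix y
    have "((\<lambda>x2. of_real (2 * sinc_fun (2 * pi * (\<theta> * Q1 a y))) * ee ((- (\<theta> * Q2 b y)) * x2))
        has_integral of_real (2 * sinc_fun (2 * pi * (\<theta> * Q1 a y)))
          * of_real (2 * sinc_fun (2 * pi * (- (\<theta> * Q2 b y))))) {-1..1}"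
      by (intro has_integral_mult_right has_integral_ee_scaled)
    moreover have "of_real (2 * sinc_fun (2 * pi * (\<theta> * Q1 a y)))
        * of_real (2 * sinc_fun (2 * pi * (- (\<theta> * Q2 b y)))) = complex_of_real (sinc_kernel (Q1 a y) (Q2 b y) \<theta>)"
      by (simp add: sinc_kernel_def)
    ultimately show "integral (cbox (-1) 1)
        (\<lambda>x2. of_real (2 * sinc_fun (2 * pi * (\<theta> * Q1 a y))) * ee ((- (\<theta> * Q2 b y)) * x2))
        = complex_of_real (sinc_kernel (Q1 a y) (Q2 b y) \<theta>)"
      by (metis box_real(2) integral_unique)
  qed
  finally show ?thesis .
qed

section \<open>The sup norm and cubes\<close>

lemma sum_Basis_vec_nth [simp]: "(\<Sum>x\<in>Basis. (x :: real^'n) $ i) = 1"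
proof -
  have "(One :: real^'n) $ i = 1"
    by (metis Cart_1 one_index)
  then show ?thesis
    by (simp only: sum_component)
qed

lemma supnorm4_le_iff: "supnorm4 y \<le> r \<longleftrightarrow> (\<forall>i. \<bar>y $ i\<bar> \<le> r)"
  unfolding supnorm4_def by (subst Max_le_iff) auto

lemma supnorm4_less_iff: "supnorm4 y < r \<longleftrightarrow> (\<forall>i. \<bar>y $ i\<bar> < r)"
  unfolding supnorm4_def by (subst Max_less_iff) auto

lemma supnorm4_eq_infnorm: "supnorm4 y = infnorm y"
proof -
  have "{\<bar>y $ i\<bar> |i. i \<in> UNIV} = range (\<lambda>i. \<bar>y $ i\<bar>)"
    by auto
  then show ?thesis
    unfolding supnorm4_def infnorm_cart by (simp add: cSup_eq_Max)
qed

lemma supnorm4_nonneg: "0 \<le> supnorm4 y"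
  by (simp add: supnorm4_eq_infnorm infnorm_pos_le)

lemma abs_supnorm4 [simp]: "\<bar>supnorm4 y\<bar> = supnorm4 y"
  by (simp add: supnorm4_nonneg)

lemma supnorm4_eq_0_iff [simp]: "supnorm4 y = 0 \<longleftrightarrow> y = 0"
  by (simp add: supnorm4_eq_infnorm infnorm_eq_0)

lemma supnorm4_0 [simp]: "supnorm4 0 = 0"
  by simp

lemma supnorm4_One [simp]: "supnorm4 One = 1"
  by (simp add: supnorm4_def)

lemma supnorm4_pos_iff: "0 < supnorm4 y \<longleftrightarrow> y \<noteq> 0"
  by (simp add: supnorm4_eq_infnorm infnorm_pos_lt)

lemma supnorm4_scaleR: "supnorm4 (c *\<^sub>R y) = \<bar>c\<bar> * supnorm4 y"
  by (simp add: supnorm4_eq_infnorm infnorm_mul)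

lemma continuous_on_supnorm4 [continuous_intros]:
  "continuous_on S f \<Longrightarrow> continuous_on S (\<lambda>x. supnorm4 (f x))"
  unfolding supnorm4_eq_infnorm by (intro continuous_intros)

definition cube :: "real \<Rightarrow> (real^4) set" where
  "cube r = cbox (- (r *\<^sub>R One)) (r *\<^sub>R One)"

definition open_cube :: "real \<Rightarrow> (real^4) set" where
  "open_cube r = box (- (r *\<^sub>R One)) (r *\<^sub>R One)"

definition shell :: "real \<Rightarrow> real \<Rightarrow> (real^4) set" where
  "shell p q = {y. p \<le> supnorm4 y \<and> supnorm4 y < q}"

lemma mem_cube: "y \<in> cube r \<longleftrightarrow> supnorm4 y \<le> r"
  unfolding cube_def supnorm4_le_iff mem_box_cart vector_scaleR_component vector_uminus_component sum_component sum_Basis_vec_nth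
  by (simp add: abs_le_iff) (meson minus_le_iff)

lemma mem_open_cube: "y \<in> open_cube r \<longleftrightarrow> supnorm4 y < r"
  unfolding open_cube_def supnorm4_less_iff mem_box_cart vector_scaleR_component vector_uminus_component
    sum_component sum_Basis_vec_nth
  by (simp add: abs_less_iff) (meson minus_less_iff)

lemma content_cube_1: "Henstock_Kurzweil_Integration.content (cube 1) = 16"
proof -
  have "cube 1 \<noteq> {}"
    using mem_cube[of 0 1] by auto
  then have "Henstock_Kurzweil_Integration.content (cube 1) = (\<Prod>i\<in>UNIV. (One::real^4) $ i - (- One) $ i)"
    unfolding cube_def by (subst content_cbox_cart) auto
  then show ?thesis
    by simp
qed

lemma has_integral_cube_scaleR:
  fixes f :: "real^4 \<Rightarrow> real"
  assumes "(f has_integral i) (cube r)" "0 < m"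
  shows "((\<lambda>x. f (m *\<^sub>R x)) has_integral i / m ^ 4) (cube (r / m))"
proof -
  have "((\<lambda>x. f (m *\<^sub>R x + 0)) has_integral i /\<^sub>R m ^ DIM(real^4))
      (cbox ((- (r *\<^sub>R One) - 0) /\<^sub>R m) ((r *\<^sub>R One - 0) /\<^sub>R m))"
    using assms unfolding cube_def by (intro has_integral_affinity') auto
  then show ?thesis
    by (simp add: cube_def divide_inverse_commute)
qed

lemma has_integral_shell:
  fixes f :: "real^4 \<Rightarrow> real"
  assumes "(f has_integral I) (open_cube q)" "(f has_integral J) (open_cube p)" "p \<le> q"
  shows "(f has_integral I - J) (shell p q)"
proof -
  have "((\<lambda>x. (if x \<in> open_cube q then f x else 0) - (if x \<in> open_cube p then f x else 0))
      has_integral I - J) UNIV"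
    using assms by (intro has_integral_diff) (simp_all add: has_integral_restrict_UNIV)
  moreover have "(\<lambda>x. (if x \<in> open_cube q then f x else 0) - (if x \<in> open_cube p then f x else 0))
      = (\<lambda>x. if x \<in> shell p q then f x else 0)"
    using assms(3) by (auto simp: fun_eq_iff shell_def mem_open_cube)
  ultimately show ?thesis
    by (simp add: has_integral_restrict_UNIV)
qed

lemma continuous_integrable_on_shell:
  fixes f :: "real^4 \<Rightarrow> real"
  assumes "continuous_on UNIV f" "p \<le> q"
  shows "f integrable_on shell p q"
proof -
  have "f integrable_on open_cube r" for r
    unfolding open_cube_def integrable_on_open_interval
    using assms(1) by (intro integrable_continuous) (auto intro: continuous_on_subset)
  then show ?thesis
    using has_integral_shell[of f _ q _ p] assms(2) by (meson integrable_integral integrable_on_def)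
qed

lemma integral_shell_add:
  fixes f :: "real^4 \<Rightarrow> real"
  assumes "f integrable_on shell p q" "f integrable_on shell q s" "p \<le> q" "q \<le> s"
  shows "integral (shell p s) f = integral (shell p q) f + integral (shell q s) f"
proof -
  have "shell p s = shell p q \<union> shell q s" "shell p q \<inter> shell q s = {}"
    using assms by (auto simp: shell_def)
  then show ?thesis
    using assms by (simp add: has_integral_Un integrable_integral integral_unique)
qed

section \<open>Positive quadratic gauges\<close>

locale quadratic_gauge =
  fixes M :: "real^4 \<Rightarrow> real"
  assumes continuous_on_M: "continuous_on UNIV M"
    and M_scaleR: "M (c *\<^sub>R y) = c\<^sup>2 * M y"
    and M_pos: "y \<noteq> 0 \<Longrightarrow> 0 < M y"
begin

lemma M_0 [simp]: "M 0 = 0"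
  using M_scaleR[of 0 0] by simp

lemma M_nonneg: "0 \<le> M y"
  using M_pos[of y] by (cases "y = 0") auto

lemma M_lower_bound:
  obtains m where "0 < m" "\<And>y. m * (supnorm4 y)\<^sup>2 \<le> M y"
proof -
  define S where "S = {y. supnorm4 y = 1}"
  have "compact S"
    unfolding S_def compact_eq_bounded_closed
  proof
    show "bounded {y. supnorm4 y = 1}"
      by (rule bounded_subset[OF compact_imp_bounded[OF compact_cbox], of _ "- One" One])
         (auto simp: mem_cube [of _ 1, unfolded cube_def, simplified])
    show "closed {y. supnorm4 y = 1}"
      by (intro closed_Collect_eq continuous_intros)
  qed
  moreover have "One \<in> S"
    by (simp add: S_def)
  ultimately obtain u where "u \<in> S" and u: "\<And>y. y \<in> S \<Longrightarrow> M u \<le> M y"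
    using continuous_attains_inf[of S M] continuous_on_subset[OF continuous_on_M] by blast
  then have "0 < M u"
    by (intro M_pos) (auto simp: S_def)
  moreover have "M u * (supnorm4 y)\<^sup>2 \<le> M y" for y
  proof (cases "y = 0")
    case False
    define s where "s = supnorm4 y"
    have s: "0 < s"
      unfolding s_def supnorm4_pos_iff using False .
    have "M u \<le> M ((1 / s) *\<^sub>R y)"
      using s by (intro u) (simp add: S_def supnorm4_scaleR s_def supnorm4_pos_iff)
    then show ?thesis
      using s by (simp add: M_scaleR power_divide s_def [symmetric] pos_le_divide_eq)
  qed simp
  ultimately show ?thesis
    using that by blast
qed

definition trunc_inverse :: "real \<Rightarrow> real^4 \<Rightarrow> real" where
  "trunc_inverse c y = 1 / max (M y) (1 / c)"

lemma continuous_on_trunc_inverse: "0 < c \<Longrightarrow> continuous_on S (trunc_inverse c)"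
  unfolding trunc_inverse_def [abs_def]
  by (intro continuous_intros continuous_on_subset[OF continuous_on_M]) (auto simp: max_def)

lemma trunc_inverse_nonneg: "0 < c \<Longrightarrow> 0 \<le> trunc_inverse c y"
  using M_nonneg[of y] by (simp add: trunc_inverse_def le_max_iff_disj)

lemma trunc_inverse_le: "y \<noteq> 0 \<Longrightarrow> 0 < c \<Longrightarrow> trunc_inverse c y \<le> 1 / M y"
  using M_pos[of y] by (auto simp: trunc_inverse_def intro!: divide_left_mono)

lemma trunc_inverse_mono:
  assumes "0 < c" "c \<le> d"
  shows "trunc_inverse c y \<le> trunc_inverse d y"
proof -
  have "1 / d \<le> 1 / c"
    using assms by (intro divide_left_mono) auto
  then have "max (M y) (1 / d) \<le> max (M y) (1 / c)"
    by auto
  moreover have "0 < max (M y) (1 / d)"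
    using assms by (simp add: less_max_iff_disj)
  ultimately show ?thesis
    unfolding trunc_inverse_def by (intro divide_left_mono) auto
qed

lemma trunc_inverse_scaleR: "0 < r \<Longrightarrow> trunc_inverse c (r *\<^sub>R y) = trunc_inverse (c * r\<^sup>2) y / r\<^sup>2"
proof -
  assume r: "0 < r"
  have "max (r\<^sup>2 * M y) (1 / c) = r\<^sup>2 * max (M y) (1 / (c * r\<^sup>2))"
    using r by (simp add: max_mult_distrib_left field_simps)
  then show ?thesis
    using r by (simp add: trunc_inverse_def M_scaleR)
qed

lemma tendsto_trunc_inverse: "y \<noteq> 0 \<Longrightarrow> (\<lambda>n. trunc_inverse (real n + 1) y) \<longlonglongrightarrow> 1 / M y"
proof (rule tendsto_eventually)
  assume y: "y \<noteq> 0"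
  obtain N :: nat where N: "1 / M y < real N"
    using reals_Archimedean2 by blast
  have "trunc_inverse (real n + 1) y = 1 / M y" if "N \<le> n" for n
  proof -
    have "1 / M y < real n + 1"
      using N that by linarith
    then have "1 / (real n + 1) \<le> M y"
      using M_pos[OF y] by (simp add: divide_less_eq field_simps)
    then show ?thesis
      by (simp add: trunc_inverse_def max_def)
  qed
  then show "\<forall>\<^sub>F n in sequentially. trunc_inverse (real n + 1) y = 1 / M y"
    by (auto simp: eventually_sequentially)
qed

lemma has_integral_trunc_inverse_cube:
  "0 < c \<Longrightarrow> (trunc_inverse c has_integral integral (cube r) (trunc_inverse c)) (cube r)"
  unfolding cube_def by (intro integrable_integral integrable_continuous continuous_on_trunc_inverse)

lemma has_integral_trunc_inverse_half_cube:
  assumes "0 < c"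
  shows "(trunc_inverse c has_integral integral (cube 1) (trunc_inverse (c / 4)) / 4) (cube (1 / 2))"
proof -
  have "((\<lambda>x. trunc_inverse (c / 4) (2 *\<^sub>R x)) has_integral integral (cube 1) (trunc_inverse (c / 4)) / 2 ^ 4)
      (cube (1 / 2))"
    using has_integral_cube_scaleR[OF has_integral_trunc_inverse_cube[of "c / 4" 1], of 2] assms by simp
  then have "((\<lambda>x. 4 * (trunc_inverse c x / 4)) has_integral 4 * (integral (cube 1) (trunc_inverse (c / 4)) / 16))
      (cube (1 / 2))"
    by (intro has_integral_mult_right) (simp add: trunc_inverse_scaleR)
  then show ?thesis
    by simp
qed

text \<open>By homogeneity the half cube carries a quarter of the integral of the truncation at \<open>c / 4\<close>,
  and off the half cube \<open>M\<close> is bounded below.\<close>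
lemma integral_trunc_inverse_bounded:
  obtains B where "\<And>c. 0 < c \<Longrightarrow> integral (cube 1) (trunc_inverse c) \<le> B"
proof -
  obtain m where m: "0 < m" "\<And>y. m * (supnorm4 y)\<^sup>2 \<le> M y"
    using M_lower_bound by blast
  define J where "J c = integral (cube 1) (trunc_inverse c)" for c
  have "J c \<le> 256 / (3 * m)" if c: "0 < c" for c
  proof -
    have half: "((\<lambda>y. if y \<in> cube (1 / 2) then trunc_inverse c y else 0) has_integral J (c / 4) / 4) (cube 1)"
      using has_integral_trunc_inverse_half_cube[OF c]
      by (subst has_integral_restrict) (auto simp: mem_cube J_def)
    have const: "((\<lambda>y. 4 / m) has_integral 16 * (4 / m)) (cube 1)"
      using has_integral_const[of "4 / m" "- One" "One :: real^4"] content_cube_1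
      by (simp add: cube_def)
    have le: "trunc_inverse c y \<le> (if y \<in> cube (1 / 2) then trunc_inverse c y else 0) + 4 / m"
      if "y \<in> cube 1" for y
    proof (cases "y \<in> cube (1 / 2)")
      case False
      then have s: "1 / 2 < supnorm4 y"
        by (simp add: mem_cube)
      then have "y \<noteq> 0"
        by auto
      then have "trunc_inverse c y \<le> 1 / M y"
        using c by (rule trunc_inverse_le)
      also have "\<dots> \<le> 1 / (m * (supnorm4 y)\<^sup>2)"
        using m M_pos[OF \<open>y \<noteq> 0\<close>] \<open>y \<noteq> 0\<close> by (intro divide_left_mono) (auto simp: supnorm4_pos_iff)
      also have "\<dots> \<le> 1 / (m * (1 / 2)\<^sup>2)"
        using s m(1) \<open>y \<noteq> 0\<close>
        by (intro divide_left_mono mult_left_mono power_mono) (auto simp: supnorm4_pos_iff)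
      finally show ?thesis
        using False by (simp add: field_simps power2_eq_square)
    qed (use m(1) in simp)
    have "J c \<le> J (c / 4) / 4 + 16 * (4 / m)"
      using has_integral_le[OF has_integral_trunc_inverse_cube[OF c, of 1] has_integral_add[OF half const]] le
      unfolding J_def by blast
    moreover have "J (c / 4) \<le> J c"
      unfolding J_def using c
      by (intro has_integral_le[OF has_integral_trunc_inverse_cube has_integral_trunc_inverse_cube]
          trunc_inverse_mono) auto
    ultimately show ?thesis
      by simp
  qed
  then show ?thesis
    using that unfolding J_def by blast
qed

definition gauge_constant :: real where
  "gauge_constant = integral (cube 1) (\<lambda>y. 1 / M y)"

lemma integrable_inverse_punctured_cube_1: "(\<lambda>y. 1 / M y) integrable_on cube 1 - {0}"
proof -
  obtain B where B: "\<And>c. 0 < c \<Longrightarrow> integral (cube 1) (trunc_inverse c) \<le> B"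
    using integral_trunc_inverse_bounded by blast
  have "negligible {0 :: real^4}"
    by simp
  then have int_eq: "integral (cube 1 - {0}) (trunc_inverse c) = integral (cube 1) (trunc_inverse c)"
    and int: "trunc_inverse c integrable_on cube 1 - {0}" if "0 < c" for c
    using has_integral_trunc_inverse_cube[OF that, of 1]
    by (auto intro: integral_spike_set integrable_spike_set negligible_subset[of "{0}"])
  have "0 \<le> integral (cube 1) (trunc_inverse c)" if "0 < c" for c
    by (rule has_integral_nonneg[OF has_integral_trunc_inverse_cube[OF that]])
       (simp add: trunc_inverse_nonneg that)
  then have "range (\<lambda>k. integral (cube 1 - {0}) (trunc_inverse (real k + 1))) \<subseteq> {0..B}"
    using B int_eq by auto
  then have bounded: "bounded (range (\<lambda>k. integral (cube 1 - {0}) (trunc_inverse (real k + 1))))"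
    by (rule bounded_subset[OF bounded_closed_interval])
  have "(\<lambda>y. 1 / M y) integrable_on cube 1 - {0} \<and>
      (\<lambda>k. integral (cube 1 - {0}) (trunc_inverse (real k + 1))) \<longlonglongrightarrow> integral (cube 1 - {0}) (\<lambda>y. 1 / M y)"
  proof (rule monotone_convergence_increasing)
    show "trunc_inverse (real k + 1) integrable_on cube 1 - {0}" for k
      by (rule int) simp
    show "trunc_inverse (real k + 1) y \<le> trunc_inverse (real (Suc k) + 1) y" for k y
      by (rule trunc_inverse_mono) simp_all
    show "(\<lambda>k. trunc_inverse (real k + 1) y) \<longlonglongrightarrow> 1 / M y" if "y \<in> cube 1 - {0}" for y
      using that by (intro tendsto_trunc_inverse) simp
  qed (rule bounded)
  then show ?thesis
    by blast
qed

lemma has_integral_inverse_cube_1: "((\<lambda>y. 1 / M y) has_integral gauge_constant) (cube 1)"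
proof -
  have "(\<lambda>y. 1 / M y) integrable_on cube 1"
    using integrable_inverse_punctured_cube_1 by (rule integrable_spike_set) (auto intro: negligible_subset[of "{0}"])
  then show ?thesis
    by (simp add: gauge_constant_def has_integral_integral)
qed

lemma has_integral_inverse_punctured_cube_1: "((\<lambda>y. 1 / M y) has_integral gauge_constant) (cube 1 - {0})"
proof -
  have "integral (cube 1 - {0}) (\<lambda>y. 1 / M y) = gauge_constant"
    unfolding gauge_constant_def by (rule integral_spike_set) (auto intro: negligible_subset[of "{0}"])
  then show ?thesis
    using integrable_inverse_punctured_cube_1 by (metis has_integral_integral)
qed

lemma has_integral_inverse_cube:
  assumes "0 < s"
  shows "((\<lambda>y. 1 / M y) has_integral s\<^sup>2 * gauge_constant) (cube s)"
proof -
  have "((\<lambda>y. 1 / M ((1 / s) *\<^sub>R y)) has_integral gauge_constant / (1 / s) ^ 4) (cube (1 / (1 / s)))"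
    using assms by (intro has_integral_cube_scaleR has_integral_inverse_cube_1) auto
  then have "((\<lambda>y. 1 / s\<^sup>2 * (1 / M ((1 / s) *\<^sub>R y))) has_integral 1 / s\<^sup>2 * (gauge_constant / (1 / s) ^ 4))
      (cube s)"
    using assms by (intro has_integral_mult_right) simp
  moreover have "(\<lambda>y. 1 / s\<^sup>2 * (1 / M ((1 / s) *\<^sub>R y))) = (\<lambda>y. 1 / M y)"
    using assms by (simp add: M_scaleR power_divide fun_eq_iff)
  moreover have "1 / s\<^sup>2 * (gauge_constant / (1 / s) ^ 4) = s\<^sup>2 * gauge_constant"
    using assms by (simp add: power_divide) (simp add: field_simps power2_eq_square power4_eq_xxxx)
  moreover have "cube (1 / (1 / s)) = cube s"
    by simp
  ultimately show ?thesis
    by (simp only:)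
qed

lemma has_integral_inverse_shell:
  assumes "0 < p" "p \<le> q"
  shows "((\<lambda>y. 1 / M y) has_integral (q\<^sup>2 - p\<^sup>2) * gauge_constant) (shell p q)"
proof -
  have "((\<lambda>y. 1 / M y) has_integral s\<^sup>2 * gauge_constant) (open_cube s)" if "0 < s" for s
    using has_integral_inverse_cube[OF that]
    by (simp add: cube_def open_cube_def has_integral_open_interval)
  then show ?thesis
    using has_integral_shell[of _ _ q _ p] assms by (simp add: left_diff_distrib)
qed

end

context quadratic_gauge
begin

definition weighted_inverse :: "real^4 \<Rightarrow> real" where
  "weighted_inverse y = 1 / ((supnorm4 y)\<^sup>2 * M y)"

lemma weighted_inverse_eq: "weighted_inverse y = 1 / M y / (supnorm4 y)\<^sup>2"
  by (simp add: weighted_inverse_def mult.commute)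

lemma integrable_weighted_inverse_shell:
  assumes "0 < p" "p \<le> q"
  shows "weighted_inverse integrable_on shell p q"
proof -
  obtain m where m: "0 < m" "\<And>y. m * (supnorm4 y)\<^sup>2 \<le> M y"
    using M_lower_bound by blast
  define f where "f y = 1 / ((max (supnorm4 y) p)\<^sup>2 * max (M y) (m * p\<^sup>2))" for y
  have "continuous_on UNIV f"
    unfolding f_def using assms m(1)
    by (intro continuous_intros continuous_on_M) (auto simp: max_def)
  then have "f integrable_on shell p q"
    using assms(2) by (rule continuous_integrable_on_shell)
  moreover have "f y = weighted_inverse y" if "y \<in> shell p q" for y
  proof -
    have s: "p \<le> supnorm4 y"
      using that by (simp add: shell_def)
    have "m * p\<^sup>2 \<le> m * (supnorm4 y)\<^sup>2"
      using s assms m(1) by (intro mult_left_mono power_mono) auto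
    also have "\<dots> \<le> M y"
      by (rule m(2))
    finally show ?thesis
      using s by (simp add: f_def weighted_inverse_def max_def)
  qed
  ultimately show ?thesis
    by (rule integrable_eq)
qed

lemma integral_weighted_inverse_shell_bounds:
  assumes r: "0 < r" and q: "1 < q"
  shows "gauge_constant * (1 - 1 / q\<^sup>2) \<le> integral (shell r (r * q)) weighted_inverse"
    and "integral (shell r (r * q)) weighted_inverse \<le> gauge_constant * (q\<^sup>2 - 1)"
proof -
  have rq: "r \<le> r * q"
    using r q by simp
  have w: "(weighted_inverse has_integral integral (shell r (r * q)) weighted_inverse) (shell r (r * q))"
    using integrable_weighted_inverse_shell[OF r rq] by (rule integrable_integral)
  have g: "((\<lambda>y. 1 / M y / c) has_integral ((r * q)\<^sup>2 - r\<^sup>2) * gauge_constant / c) (shell r (r * q))" for c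
    using has_integral_divide[OF has_integral_inverse_shell[OF r rq]] by simp
  have "1 / M y / (r * q)\<^sup>2 \<le> weighted_inverse y" "weighted_inverse y \<le> 1 / M y / r\<^sup>2"
    if "y \<in> shell r (r * q)" for y
  proof -
    have s: "r \<le> supnorm4 y" "supnorm4 y < r * q"
      using that by (auto simp: shell_def)
    then have "0 \<le> 1 / M y"
      using M_nonneg[of y] by simp
    moreover have "0 < supnorm4 y"
      using s r by simp
    ultimately show "1 / M y / (r * q)\<^sup>2 \<le> weighted_inverse y" "weighted_inverse y \<le> 1 / M y / r\<^sup>2"
      unfolding weighted_inverse_eq using s r
      by (auto intro!: frac_le[OF _ order_refl] power_mono simp del: divide_divide_eq_left)
  qed
  then have "((r * q)\<^sup>2 - r\<^sup>2) * gauge_constant / (r * q)\<^sup>2 \<le> integral (shell r (r * q)) weighted_inverse"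
    and "integral (shell r (r * q)) weighted_inverse \<le> ((r * q)\<^sup>2 - r\<^sup>2) * gauge_constant / r\<^sup>2"
    using has_integral_le[OF g w] has_integral_le[OF w g] by blast+
  moreover have "((r * q)\<^sup>2 - r\<^sup>2) * gauge_constant / (r * q)\<^sup>2 = gauge_constant * (1 - 1 / q\<^sup>2)"
    and "((r * q)\<^sup>2 - r\<^sup>2) * gauge_constant / r\<^sup>2 = gauge_constant * (q\<^sup>2 - 1)"
    using r q by (simp_all add: field_simps power_mult_distrib)
  ultimately show "gauge_constant * (1 - 1 / q\<^sup>2) \<le> integral (shell r (r * q)) weighted_inverse"
    and "integral (shell r (r * q)) weighted_inverse \<le> gauge_constant * (q\<^sup>2 - 1)"
    by simp_all
qed

lemma integral_weighted_inverse_geometric_shell_bounds: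
  assumes p: "0 < p" and q: "1 < q"
  shows "real n * (gauge_constant * (1 - 1 / q\<^sup>2)) \<le> integral (shell p (p * q ^ n)) weighted_inverse \<and>
    integral (shell p (p * q ^ n)) weighted_inverse \<le> real n * (gauge_constant * (q\<^sup>2 - 1))"
proof (induction n)
  case 0
  have "shell p p = {}"
    by (auto simp: shell_def)
  then show ?case
    by simp
next
  case (Suc n)
  have "1 \<le> q ^ n" "0 < p * q ^ n"
    using p q by simp_all
  moreover have "p * q ^ Suc n = p * q ^ n * q"
    by simp
  ultimately have "integral (shell p (p * q ^ Suc n)) weighted_inverse
      = integral (shell p (p * q ^ n)) weighted_inverse + integral (shell (p * q ^ n) (p * q ^ n * q)) weighted_inverse"
    using p q by (simp only:) (intro integral_shell_add integrable_weighted_inverse_shell; simp)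
  then show ?case
    using Suc integral_weighted_inverse_shell_bounds[OF \<open>0 < p * q ^ n\<close> q] by (simp add: distrib_right)
qed

lemma has_integral_weighted_inverse_shell:
  assumes Y: "0 < Y\<^sub>1" "Y\<^sub>1 < Y\<^sub>2"
  shows "(weighted_inverse has_integral 2 * gauge_constant * ln (Y\<^sub>2 / Y\<^sub>1)) (shell Y\<^sub>1 Y\<^sub>2)"
proof -
  define L where "L = ln (Y\<^sub>2 / Y\<^sub>1)"
  have L: "0 < L"
    using Y by (simp add: L_def)
  define X where "X = integral (shell Y\<^sub>1 Y\<^sub>2) weighted_inverse"
  have bounds: "gauge_constant * (real N * (1 - exp (- (2 * L / real N)))) \<le> X"
    "X \<le> gauge_constant * (real N * (exp (2 * L / real N) - 1))" if N: "0 < N" for N :: nat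
  proof -
    define q where "q = exp (L / real N)"
    have "1 < q"
      using L N by (simp add: q_def)
    moreover have "Y\<^sub>1 * q ^ N = Y\<^sub>2"
      using N Y by (simp add: q_def L_def exp_of_nat_mult [symmetric])
    moreover have "q\<^sup>2 = exp (2 * L / real N)" "1 / q\<^sup>2 = exp (- (2 * L / real N))"
      by (simp_all add: q_def exp_of_nat_mult [symmetric] exp_minus_inverse field_simps power_inverse)
    ultimately show "gauge_constant * (real N * (1 - exp (- (2 * L / real N)))) \<le> X"
      "X \<le> gauge_constant * (real N * (exp (2 * L / real N) - 1))"
      using integral_weighted_inverse_geometric_shell_bounds[OF Y(1), of q N] by (simp_all add: X_def mult_ac)
  qed
  have "(\<lambda>N. gauge_constant * (real N * (exp (2 * L / real N) - 1))) \<longlonglongrightarrow> gauge_constant * (2 * L)"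
    by (intro tendsto_mult_left) real_asymp
  then have "X \<le> gauge_constant * (2 * L)"
    by (rule LIMSEQ_le_const) (use bounds(2) in \<open>auto intro!: exI[of _ 1]\<close>)
  moreover have "(\<lambda>N. gauge_constant * (real N * (1 - exp (- (2 * L / real N))))) \<longlonglongrightarrow> gauge_constant * (2 * L)"
    by (intro tendsto_mult_left) real_asymp
  then have "gauge_constant * (2 * L) \<le> X"
    by (rule LIMSEQ_le_const2) (use bounds(1) in \<open>auto intro!: exI[of _ 1]\<close>)
  ultimately have "X = 2 * gauge_constant * L"
    by simp
  moreover have "weighted_inverse integrable_on shell Y\<^sub>1 Y\<^sub>2"
    using Y by (intro integrable_weighted_inverse_shell) auto
  ultimately show ?thesis
    by (simp add: X_def L_def has_integral_integral)
qed

end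

section \<open>The singular integral\<close>

lemma has_integral_UNIV_even:
  fixes f :: "real \<Rightarrow> 'a::banach"
  assumes cont: "continuous_on UNIV f" and even: "\<And>x. f (- x) = f x"
    and lim: "((\<lambda>t. integral {0..t} f) \<longlongrightarrow> I) at_top"
  shows "(f has_integral 2 *\<^sub>R I) UNIV"
proof (subst has_integral_alt', intro conjI allI impI)
  show "(\<lambda>x. if x \<in> UNIV then f x else 0) integrable_on cbox u v" for u v
    using integrable_continuous[OF continuous_on_subset[OF cont]] by simp
  fix e :: real
  assume "0 < e"
  then obtain B0 where B0: "\<And>t. B0 \<le> t \<Longrightarrow> norm (integral {0..t} f - I) < e / 2"
    using tendstoD[OF lim, of "e / 2"] by (auto simp: eventually_at_top_linorder dist_norm)
  show "\<exists>B>0. \<forall>u v. ball 0 B \<subseteq> cbox u v \<longrightarrow>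
      norm (integral (cbox u v) (\<lambda>x. if x \<in> UNIV then f x else 0) - 2 *\<^sub>R I) < e"
  proof (intro exI[of _ "max B0 1"] conjI allI impI)
    fix u v :: real
    assume sub: "ball 0 (max B0 1) \<subseteq> cbox u v"
    have "cball 0 (max B0 1) \<subseteq> cbox u v"
      using closure_minimal[OF sub closed_cbox] by simp
    moreover have "- max B0 1 \<in> cball 0 (max B0 1)" "max B0 1 \<in> cball 0 (max B0 1)"
      by simp_all
    ultimately have "- max B0 1 \<in> cbox u v" "max B0 1 \<in> cbox u v"
      by (meson subsetD)+
    then have uv: "u \<le> - max B0 1" "max B0 1 \<le> v"
      by simp_all
    have "integral {u..v} f = integral {u..0} f + integral {0..v} f"
      using Henstock_Kurzweil_Integration.integral_combine[of u 0 v f] uv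
        integrable_continuous_interval[OF continuous_on_subset[OF cont]]
      by simp
    also have "integral {u..0} f = integral {0..- u} f"
      using Henstock_Kurzweil_Integration.integral_reflect_real[of 0 u f] by (simp add: even)
    finally have eq: "integral (cbox u v) (\<lambda>x. if x \<in> UNIV then f x else 0) - 2 *\<^sub>R I
        = (integral {0..- u} f - I) + (integral {0..v} f - I)"
      by (simp add: box_real scaleR_2)
    have "norm (integral {0..- u} f - I) < e / 2" "norm (integral {0..v} f - I) < e / 2"
      using uv by (intro B0; linarith)+
    then show "norm (integral (cbox u v) (\<lambda>x. if x \<in> UNIV then f x else 0) - 2 *\<^sub>R I) < e"
      unfolding eq using norm_triangle_ineq[of "integral {0..- u} f - I" "integral {0..v} f - I"] by linarith
  qed simp
qed

locale real_pointless_pencil =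
  fixes a b :: "4 \<Rightarrow> int"
  assumes no_real_points: "\<And>y. Q1 a y = 0 \<Longrightarrow> Q2 b y = 0 \<Longrightarrow> y = 0"

sublocale real_pointless_pencil \<subseteq> quadratic_gauge "\<lambda>y. max \<bar>Q1 a y\<bar> \<bar>Q2 b y\<bar>"
proof
  show "continuous_on UNIV (\<lambda>y. max \<bar>Q1 a y\<bar> \<bar>Q2 b y\<bar>)"
    by (intro continuous_intros continuous_on_id)
  show "max \<bar>Q1 a (c *\<^sub>R y)\<bar> \<bar>Q2 b (c *\<^sub>R y)\<bar> = c\<^sup>2 * max \<bar>Q1 a y\<bar> \<bar>Q2 b y\<bar>" for c y
    by (simp add: Q1_scaleR Q2_scaleR abs_mult max_mult_distrib_left)
  show "0 < max \<bar>Q1 a y\<bar> \<bar>Q2 b y\<bar>" if "y \<noteq> 0" for y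
    using no_real_points[of y] that by (auto simp: less_max_iff_disj)
qed

context real_pointless_pencil
begin

lemma continuous_on_tau_inner: "continuous_on UNIV (tau_inner a b)"
  unfolding tau_inner_eq_integral_sinc_kernel [abs_def]
  by (intro integral_continuous_on_param) (auto simp: case_prod_beta intro!: continuous_intros)

lemma tau_inner_minus: "tau_inner a b (- \<theta>) = tau_inner a b \<theta>"
  by (simp add: tau_inner_eq_integral_sinc_kernel sinc_kernel_minus)

lemma integral_tau_inner_eq:
  assumes "0 \<le> t"
  shows "integral {0..t} (tau_inner a b)
      = integral (cube 1 - {0}) (\<lambda>y. complex_of_real (sinc_kernel_primitive (Q1 a y) (Q2 b y) t))"
    and "(\<lambda>y. complex_of_real (sinc_kernel_primitive (Q1 a y) (Q2 b y) t)) integrable_on cube 1 - {0}"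
proof -
  define k where "k y = integral (cbox 0 t) (\<lambda>\<theta>. complex_of_real (sinc_kernel (Q1 a y) (Q2 b y) \<theta>))" for y
  have k_eq: "k y = complex_of_real (sinc_kernel_primitive (Q1 a y) (Q2 b y) t)" if "y \<in> cube 1 - {0}" for y
    using has_integral_sinc_kernel[OF _ assms, of "Q1 a y" "Q2 b y"] M_pos[of y] that
    by (simp add: k_def box_real integral_unique has_integral_of_real)
  have "continuous_on UNIV k"
    unfolding k_def by (intro integral_continuous_on_param) (auto simp: case_prod_beta intro!: continuous_intros)
  then have "k integrable_on cube 1 - {0}"
    unfolding cube_def
    by (intro integrable_spike_set[OF integrable_continuous]) (auto intro: continuous_on_subset negligible_subset[of "{0}"])
  then show "(\<lambda>y. complex_of_real (sinc_kernel_primitive (Q1 a y) (Q2 b y) t)) integrable_on cube 1 - {0}"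
    by (rule integrable_eq) (rule k_eq)
  have "integral {0..t} (tau_inner a b) = integral (cbox (-One) One) k"
    unfolding tau_inner_eq_integral_sinc_kernel k_def box_real(2) [symmetric]
    by (rule integral_swap_continuous) (auto simp: case_prod_beta intro!: continuous_intros)
  also have "\<dots> = integral (cube 1 - {0}) k"
    unfolding cube_def by (rule integral_spike_set) (auto intro: negligible_subset[of "{0}"])
  also have "\<dots> = integral (cube 1 - {0}) (\<lambda>y. complex_of_real (sinc_kernel_primitive (Q1 a y) (Q2 b y) t))"
    by (rule integral_cong) (rule k_eq)
  finally show "integral {0..t} (tau_inner a b)
      = integral (cube 1 - {0}) (\<lambda>y. complex_of_real (sinc_kernel_primitive (Q1 a y) (Q2 b y) t))" .
qed

lemma tendsto_integral_tau_inner: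
  "((\<lambda>t. integral {0..t} (tau_inner a b)) \<longlongrightarrow> complex_of_real gauge_constant) at_top"
proof (rule tendsto_at_topI_sequentially)
  fix X :: "nat \<Rightarrow> real"
  assume X: "filterlim X at_top sequentially"
  obtain K where K: "\<And>A B t. 0 < max \<bar>A\<bar> \<bar>B\<bar> \<Longrightarrow> 0 \<le> t \<Longrightarrow>
      \<bar>sinc_kernel_primitive A B t\<bar> \<le> K / max \<bar>A\<bar> \<bar>B\<bar>"
    using sinc_kernel_primitive_bound by blast
  define S where "S = cube 1 - {0 :: real^4}"
  define Z where "Z n = max (X n) 0" for n
  have "(\<lambda>n. integral S (\<lambda>y. complex_of_real (sinc_kernel_primitive (Q1 a y) (Q2 b y) (Z n))))
      \<longlonglongrightarrow> integral S (\<lambda>y. complex_of_real (1 / max \<bar>Q1 a y\<bar> \<bar>Q2 b y\<bar>))"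
  proof (rule dominated_convergence(2))
    show "(\<lambda>y. complex_of_real (sinc_kernel_primitive (Q1 a y) (Q2 b y) (Z n))) integrable_on S" for n
      unfolding S_def by (rule integral_tau_inner_eq(2)) (simp add: Z_def)
    show "(\<lambda>y. K * (1 / max \<bar>Q1 a y\<bar> \<bar>Q2 b y\<bar>)) integrable_on S"
      unfolding S_def by (intro integrable_on_mult_right integrable_inverse_punctured_cube_1)
    show "norm (complex_of_real (sinc_kernel_primitive (Q1 a y) (Q2 b y) (Z n)))
        \<le> K * (1 / max \<bar>Q1 a y\<bar> \<bar>Q2 b y\<bar>)" if "y \<in> S" for n y
      using K[OF M_pos, of y "Z n"] that by (simp add: S_def Z_def)
    have "filterlim Z at_top sequentially"
      by (rule filterlim_at_top_mono[OF X]) (simp add: Z_def)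
    then show "(\<lambda>n. complex_of_real (sinc_kernel_primitive (Q1 a y) (Q2 b y) (Z n)))
        \<longlonglongrightarrow> complex_of_real (1 / max \<bar>Q1 a y\<bar> \<bar>Q2 b y\<bar>)" if "y \<in> S" for y
      using M_pos[of y] that unfolding S_def
      by (intro tendsto_of_real filterlim_compose[OF tendsto_sinc_kernel_primitive]) auto
  qed
  moreover have "integral S (\<lambda>y. complex_of_real (1 / max \<bar>Q1 a y\<bar> \<bar>Q2 b y\<bar>)) = complex_of_real gauge_constant"
    unfolding S_def by (intro integral_unique has_integral_of_real has_integral_inverse_punctured_cube_1)
  ultimately have "(\<lambda>n. integral S (\<lambda>y. complex_of_real (sinc_kernel_primitive (Q1 a y) (Q2 b y) (Z n))))
      \<longlonglongrightarrow> complex_of_real gauge_constant"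
    by simp
  moreover have "\<forall>\<^sub>F n in sequentially. 0 \<le> X n"
    using X by (simp add: filterlim_at_top)
  then have "\<forall>\<^sub>F n in sequentially. integral S (\<lambda>y. complex_of_real (sinc_kernel_primitive (Q1 a y) (Q2 b y) (Z n)))
      = integral {0..X n} (tau_inner a b)"
    by eventually_elim (simp add: Z_def S_def integral_tau_inner_eq(1))
  ultimately show "(\<lambda>n. integral {0..X n} (tau_inner a b)) \<longlonglongrightarrow> complex_of_real gauge_constant"
    by (rule Lim_transform_eventually)
qed

lemma tau_infty_eq: "tau_infty a b = 2 * complex_of_real gauge_constant"
  unfolding tau_infty_def
  using has_integral_UNIV_even[OF continuous_on_tau_inner tau_inner_minus tendsto_integral_tau_inner]
  by (simp add: integral_unique scaleR_conv_of_real)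

end

theorem lemma8p1:
  fixes a b :: "4 \<Rightarrow> int" and Y1 Y2 :: real
  assumes coprime: "\<And>i. gcd (a i) (b i) = 1"
    and nonprop: "\<And>i j. i \<noteq> j \<Longrightarrow> a i * b j - a j * b i \<noteq> 0"
    and no_real_points: "\<And>y::real^4. Q1 a y = 0 \<Longrightarrow> Q2 b y = 0 \<Longrightarrow> y = 0"
    and Y1: "1 \<le> Y1" and Y12: "Y1 < Y2"
  shows "((\<lambda>y::real^4. complex_of_real
             (1 / ((supnorm4 y)^2 * max \<bar>Q1 a y\<bar> \<bar>Q2 b y\<bar>)))
          has_integral (tau_infty a b * of_real (ln (Y2 / Y1))))
         {y. Y1 \<le> supnorm4 y \<and> supnorm4 y < Y2}"
proof -
  interpret real_pointless_pencil a b
    using no_real_points by unfold_locales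
  have "(weighted_inverse has_integral 2 * gauge_constant * ln (Y2 / Y1)) (shell Y1 Y2)"
    using Y1 Y12 by (intro has_integral_weighted_inverse_shell) auto
  then have "((\<lambda>y. complex_of_real (weighted_inverse y))
      has_integral complex_of_real (2 * gauge_constant * ln (Y2 / Y1))) (shell Y1 Y2)"
    by (rule has_integral_of_real)
  then show ?thesis
    by (simp add: weighted_inverse_def shell_def tau_infty_eq)
qed

end
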